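(* Let $U\in\mathbb{R}^{n\times d}$, let $\mathbf{x}_*\in\mathbb{R}^d$ be $s$-sparse and $\mathbf{y}=U\mathbf{x}_*$ (noiseless, $\mathbf{e}=0$). Let $\mathbf{x}_t$ be an iterate of Algorithm 1 and $\mathbf{x}_{t+1}$ the next iterate; let $\mathcal{S}_t,\mathcal{S}_{t+1},\mathcal{S}_*$ be the supports of $\mathbf{x}_t,\mathbf{x}_{t+1},\mathbf{x}_*$. If $|\mathcal{S}_t\setminus\mathcal{S}_*|\le s$ and $\lambda_t\ge\frac{\delta_s+\sqrt2\theta_{s,s}}{\sqrt s}\|\mathbf{x}_t-\mathbf{x}_*\|_2$, then $|\mathcal{S}_{t+1}\setminus\mathcal{S}_*|\le s$ and $|\mathcal{S}_*\cup\mathcal{S}_t\cup\mathcal{S}_{t+1}|\le3s$.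
   Context: $U_{\mathcal T}$ is the column submatrix of $U$ indexed by $\mathcal T$. $\delta_s$ is the smallest constant $\ge0$ with $(1-\delta_s)\|\mathbf{v}\|_2^2\le\|U_{\mathcal T}\mathbf{v}\|_2^2\le(1+\delta_s)\|\mathbf{v}\|_2^2$ for all $|\mathcal T|\le s$, $\mathbf{v}\in\mathbb{R}^{|\mathcal T|}$; $\theta_{s,s}$ (with $2s\le d$) is the smallest constant with $|\langle U_{\mathcal T}\mathbf{v},U_{\mathcal T'}\mathbf{v}'\rangle|\le\theta_{s,s}\|\mathbf{v}\|_2\|\mathbf{v}'\|_2$ for all disjoint $\mathcal T,\mathcal T'$ of size at most $s$. Algorithm 1: $\mathbf{x}_1=0$ and $\mathbf{x}_{t+1}=\mathrm{sign}(\widehat{\mathbf{x}}_t)[|\widehat{\mathbf{x}}_t|-\lambda_t]_+$ with $\widehat{\mathbf{x}}_t=\mathbf{x}_t-U^\top(U\mathbf{x}_t-\mathbf{y})$ (componentwise), for parameters $\lambda_t>0$. *)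

theory Defs
  imports "HOL-Analysis.Analysis"
begin

text \<open>Vectors in R^d are \<open>real ^ 'd\<close>, an n x d matrix is \<open>real ^ 'd ^ 'n\<close>.
  \<open>U *v x\<close> with x supported on T equals the column submatrix U_T applied to the
  restriction of x to T.\<close>

definition supp_vec :: "real ^ 'd \<Rightarrow> 'd set" where
  "supp_vec x = {i. x $ i \<noteq> 0}"

definition rip_const :: "real ^ 'd ^ 'n \<Rightarrow> nat \<Rightarrow> real" where
  "rip_const U s = Inf {\<delta>. \<delta> \<ge> 0 \<and>
     (\<forall>T v. card T \<le> s \<longrightarrow> supp_vec v \<subseteq> T \<longrightarrow>
        (1 - \<delta>) * (norm v)\<^sup>2 \<le> (norm (U *v v))\<^sup>2 \<and>
        (norm (U *v v))\<^sup>2 \<le> (1 + \<delta>) * (norm v)\<^sup>2)}"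

definition rop_const :: "real ^ 'd ^ 'n \<Rightarrow> nat \<Rightarrow> real" where
  "rop_const U s = Inf {\<theta>. \<theta> \<ge> 0 \<and>
     (\<forall>T T' v v'. card T \<le> s \<longrightarrow> card T' \<le> s \<longrightarrow> T \<inter> T' = {} \<longrightarrow>
        supp_vec v \<subseteq> T \<longrightarrow> supp_vec v' \<subseteq> T' \<longrightarrow>
        \<bar>(U *v v) \<bullet> (U *v v')\<bar> \<le> \<theta> * norm v * norm v')}"

definition alg_step :: "real ^ 'd ^ 'n \<Rightarrow> real ^ 'n \<Rightarrow> real \<Rightarrow> real ^ 'd \<Rightarrow> real ^ 'd" where
  "alg_step U y lam x =
     (let xh = x - transpose U *v (U *v x - y)
      in \<chi> i. sgn (xh $ i) * max (\<bar>xh $ i\<bar> - lam) 0)"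

end

theory Submission
  imports Defs
begin

text \<open>Write \<open>h = x\<^sub>t - x\<^sub>*\<close>. Since \<open>y = U x\<^sub>*\<close>, the gradient step gives
  \<open>x\<^sub>t - U\<^sup>T(U x\<^sub>t - y) = x\<^sub>* + (I - U\<^sup>T U) h\<close>. If more than \<open>s\<close> coordinates outside
  \<open>S\<^sub>*\<close> survived the soft thresholding, choose \<open>s\<close> of them, \<open>T\<close>, and let \<open>v\<close> be the
  restriction of the gradient step to \<open>T\<close>. Every entry of \<open>v\<close> exceeds \<open>\<lambda>\<^sub>t\<close>, so
  \<open>\<parallel>v\<parallel>\<^sup>2 > s \<lambda>\<^sub>t\<^sup>2\<close>. On the other hand \<open>\<parallel>v\<parallel>\<^sup>2 = \<langle>v, (I - U\<^sup>T U) h\<rangle>\<close>, and splitting \<open>h\<close> along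
  \<open>S\<^sub>*\<close> and along \<open>S\<^sub>t - S\<^sub>*\<close> and \<open>v\<close> along \<open>S\<^sub>t - S\<^sub>*\<close> bounds this by
  \<open>(\<delta>\<^sub>s + \<surd>2 \<theta>\<^sub>s\<^sub>,\<^sub>s) \<parallel>v\<parallel> \<parallel>h\<parallel> \<le> \<surd>s \<lambda>\<^sub>t \<parallel>v\<parallel>\<close>, a contradiction. The bound on the union
  of the three supports is then counting.\<close>

lemma matrix_vector_norm_bound:
  fixes U :: "real^'d^'n"
  obtains K where "K > 0" "\<And>v. norm (U *v v) \<le> K * norm v"
  using bounded_linear.pos_bounded[OF matrix_vector_mul_bounded_linear[of U]]
  by (auto simp: mult.commute)

text \<open>Both constants are infima of closed sets bounded below by \<open>0\<close>, hence attained.\<close>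

lemma rip_const_attained:
  fixes U :: "real^'d^'n"
  shows "rip_const U s \<ge> 0 \<and> (\<forall>T v. card T \<le> s \<longrightarrow> supp_vec v \<subseteq> T \<longrightarrow>
     (1 - rip_const U s) * (norm v)\<^sup>2 \<le> (norm (U *v v))\<^sup>2 \<and>
     (norm (U *v v))\<^sup>2 \<le> (1 + rip_const U s) * (norm v)\<^sup>2)"
proof -
  let ?S = "{\<delta>. \<delta> \<ge> 0 \<and> (\<forall>T v. card T \<le> s \<longrightarrow> supp_vec v \<subseteq> T \<longrightarrow>
     (1 - \<delta>) * (norm v)\<^sup>2 \<le> (norm (U *v v))\<^sup>2 \<and> (norm (U *v v))\<^sup>2 \<le> (1 + \<delta>) * (norm v)\<^sup>2)}"
  obtain K where K: "K > 0" "\<And>v. norm (U *v v) \<le> K * norm v"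
    using matrix_vector_norm_bound by blast
  have "(norm (U *v v))\<^sup>2 \<le> (1 + (1 + K\<^sup>2)) * (norm v)\<^sup>2" for v :: "real^'d"
  proof -
    have "(norm (U *v v))\<^sup>2 \<le> K\<^sup>2 * (norm v)\<^sup>2"
      using power_mono[OF K(2)[of v]] by (simp add: power_mult_distrib)
    also have "\<dots> \<le> (1 + (1 + K\<^sup>2)) * (norm v)\<^sup>2"
      by (intro mult_right_mono) auto
    finally show ?thesis .
  qed
  moreover have "(1 - (1 + K\<^sup>2)) * (norm v)\<^sup>2 \<le> (norm (U *v v))\<^sup>2" for v :: "real^'d"
    by (rule order_trans[of _ 0]) auto
  ultimately have "1 + K\<^sup>2 \<in> ?S"
    unfolding mem_Collect_eq by (intro conjI allI impI) auto
  then have "?S \<noteq> {}"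
    by blast
  then have "Inf ?S \<in> ?S"
    by (intro closed_contains_Inf bdd_belowI[of _ 0])
       (auto intro!: closed_Collect_conj closed_Collect_all closed_Collect_imp
          closed_Collect_le open_Collect_const continuous_intros)
  then show ?thesis
    unfolding rip_const_def by simp
qed

lemma rop_const_attained:
  fixes U :: "real^'d^'n"
  shows "rop_const U s \<ge> 0 \<and> (\<forall>T T' v v'. card T \<le> s \<longrightarrow> card T' \<le> s \<longrightarrow> T \<inter> T' = {} \<longrightarrow>
     supp_vec v \<subseteq> T \<longrightarrow> supp_vec v' \<subseteq> T' \<longrightarrow>
     \<bar>(U *v v) \<bullet> (U *v v')\<bar> \<le> rop_const U s * norm v * norm v')"
proof -
  let ?S = "{\<theta>. \<theta> \<ge> 0 \<and> (\<forall>T T' v v'. card T \<le> s \<longrightarrow> card T' \<le> s \<longrightarrow> T \<inter> T' = {} \<longrightarrow>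
     supp_vec v \<subseteq> T \<longrightarrow> supp_vec v' \<subseteq> T' \<longrightarrow>
     \<bar>(U *v v) \<bullet> (U *v v')\<bar> \<le> \<theta> * norm v * norm v')}"
  obtain K where K: "K > 0" "\<And>v. norm (U *v v) \<le> K * norm v"
    using matrix_vector_norm_bound by blast
  have "\<bar>(U *v v) \<bullet> (U *v v')\<bar> \<le> K\<^sup>2 * norm v * norm v'" for v v' :: "real^'d"
  proof -
    have "\<bar>(U *v v) \<bullet> (U *v v')\<bar> \<le> norm (U *v v) * norm (U *v v')"
      by (rule Cauchy_Schwarz_ineq2)
    also have "\<dots> \<le> (K * norm v) * (K * norm v')"
      using K by (intro mult_mono) auto
    finally show ?thesis
      by (simp add: power2_eq_square algebra_simps)
  qed
  then have "K\<^sup>2 \<in> ?S"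
    unfolding mem_Collect_eq by (intro conjI allI impI) auto
  then have "?S \<noteq> {}"
    by blast
  then have "Inf ?S \<in> ?S"
    by (intro closed_contains_Inf bdd_belowI[of _ 0])
       (auto intro!: closed_Collect_conj closed_Collect_all closed_Collect_imp
          closed_Collect_le open_Collect_const continuous_intros)
  then show ?thesis
    unfolding rop_const_def by simp
qed

lemma rip_const_nonneg: "rip_const U s \<ge> 0"
  using rip_const_attained by blast

lemma rop_const_nonneg: "rop_const U s \<ge> 0"
  using rop_const_attained by blast

lemma rip_const_le:
  assumes "card T \<le> s" "supp_vec v \<subseteq> T"
  shows "\<bar>(norm v)\<^sup>2 - (norm (U *v v))\<^sup>2\<bar> \<le> rip_const U s * (norm v)\<^sup>2"
  using rip_const_attained[of U s] assms by (auto simp: abs_le_iff algebra_simps)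

lemma rop_const_le:
  assumes "card T \<le> s" "card T' \<le> s" "T \<inter> T' = {}" "supp_vec v \<subseteq> T" "supp_vec v' \<subseteq> T'"
  shows "\<bar>(U *v v) \<bullet> (U *v v')\<bar> \<le> rop_const U s * norm v * norm v'"
  using rop_const_attained[of U s] assms by blast

definition restrict_vec :: "'d set \<Rightarrow> real^'d \<Rightarrow> real^'d" where
  "restrict_vec A w = (\<chi> i. if i \<in> A then w $ i else 0)"

lemma supp_vec_restrict_vec: "supp_vec (restrict_vec A w) = A \<inter> supp_vec w"
  by (auto simp: supp_vec_def restrict_vec_def)

lemma restrict_vec_add_Compl: "restrict_vec A w + restrict_vec (- A) w = w"
  by (simp add: restrict_vec_def vec_eq_iff)

lemma norm_restrict_vec_le: "norm (restrict_vec A w) \<le> norm w"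
proof -
  have "restrict_vec A w \<bullet> restrict_vec A w \<le> w \<bullet> w"
    unfolding inner_vec_def restrict_vec_def by (intro sum_mono) auto
  then show ?thesis
    by (simp add: norm_le)
qed

lemma inner_restrict_vec_self: "restrict_vec A w \<bullet> w = (norm (restrict_vec A w))\<^sup>2"
  unfolding power2_norm_eq_inner inner_vec_def restrict_vec_def by (intro sum.cong) auto

lemma supp_vec_add: "supp_vec (u + w) \<subseteq> supp_vec u \<union> supp_vec w"
  by (auto simp: supp_vec_def)

lemma supp_vec_diff: "supp_vec (u - w) \<subseteq> supp_vec u \<union> supp_vec w"
  by (auto simp: supp_vec_def)

lemma inner_eq_0_if_disjoint_supp: "supp_vec u \<inter> supp_vec w = {} \<Longrightarrow> u \<bullet> w = 0"
  unfolding inner_vec_def supp_vec_def by (rule sum.neutral) (auto simp: disjoint_iff)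

lemma rip_inner_deviation_le:
  fixes U :: "real^'d^'n"
  assumes A: "card A \<le> s" and u: "supp_vec u \<subseteq> A" and u': "supp_vec u' \<subseteq> A"
  shows "\<bar>u \<bullet> u' - (U *v u) \<bullet> (U *v u')\<bar> \<le> rip_const U s * norm u * norm u'"
proof -
  define \<delta> where "\<delta> = rip_const U s"
  have unit: "\<bar>p \<bullet> q - (U *v p) \<bullet> (U *v q)\<bar> \<le> \<delta>"
    if p: "supp_vec p \<subseteq> A" "norm p = 1" and q: "supp_vec q \<subseteq> A" "norm q = 1" for p q
  proof -
    have plus: "\<bar>(norm (p + q))\<^sup>2 - (norm (U *v (p + q)))\<^sup>2\<bar> \<le> \<delta> * (norm (p + q))\<^sup>2"
      unfolding \<delta>_def using supp_vec_add[of p q] p q by (intro rip_const_le[OF A]) blast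
    have minus: "\<bar>(norm (p - q))\<^sup>2 - (norm (U *v (p - q)))\<^sup>2\<bar> \<le> \<delta> * (norm (p - q))\<^sup>2"
      unfolding \<delta>_def using supp_vec_diff[of p q] p q by (intro rip_const_le[OF A]) blast
    \<comment> \<open>polarization, together with the parallelogram law \<open>\<parallel>p+q\<parallel>\<^sup>2 + \<parallel>p-q\<parallel>\<^sup>2 = 4\<close>\<close>
    have "4 * (p \<bullet> q - (U *v p) \<bullet> (U *v q))
        = ((norm (p + q))\<^sup>2 - (norm (U *v (p + q)))\<^sup>2)
          - ((norm (p - q))\<^sup>2 - (norm (U *v (p - q)))\<^sup>2)"
      by (simp add: power2_norm_eq_inner algebra_simps inner_commute)
    moreover have "(norm (p + q))\<^sup>2 + (norm (p - q))\<^sup>2 = 4"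
      using p q by (simp add: norm_eq_1 power2_norm_eq_inner algebra_simps inner_commute)
    then have "\<delta> * (norm (p + q))\<^sup>2 + \<delta> * (norm (p - q))\<^sup>2 = 4 * \<delta>"
      by (simp flip: distrib_left)
    ultimately show ?thesis
      using plus minus by (simp add: abs_le_iff)
  qed
  show ?thesis
  proof (cases "u = 0 \<or> u' = 0")
    case True
    then show ?thesis by auto
  next
    case False
    then have n: "norm u > 0" "norm u' > 0" by auto
    have "\<bar>(u /\<^sub>R norm u) \<bullet> (u' /\<^sub>R norm u') - (U *v (u /\<^sub>R norm u)) \<bullet> (U *v (u' /\<^sub>R norm u'))\<bar> \<le> \<delta>"
      using u u' n by (intro unit) (auto simp: supp_vec_def)
    moreover have "(u /\<^sub>R norm u) \<bullet> (u' /\<^sub>R norm u') - (U *v (u /\<^sub>R norm u)) \<bullet> (U *v (u' /\<^sub>R norm u'))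
        = (u \<bullet> u' - (U *v u) \<bullet> (U *v u')) / (norm u * norm u')"
      by (simp add: matrix_vector_mult_scaleR divide_inverse algebra_simps)
    ultimately have "\<bar>u \<bullet> u' - (U *v u) \<bullet> (U *v u')\<bar> / (norm u * norm u') \<le> \<delta>"
      using n by (simp add: abs_div)
    then show ?thesis
      using n by (simp add: \<delta>_def divide_le_eq mult.assoc)
  qed
qed

lemma norm_add_norm_le_sqrt2_norm:
  fixes a b :: "'a::real_inner"
  assumes "a \<bullet> b = 0"
  shows "norm a + norm b \<le> sqrt 2 * norm (a + b)"
proof -
  have "(norm (a + b))\<^sup>2 = (norm a)\<^sup>2 + (norm b)\<^sup>2"
    using assms by (intro norm_add_Pythagorean) (simp add: orthogonal_def)
  then have "(norm a + norm b)\<^sup>2 \<le> 2 * (norm (a + b))\<^sup>2"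
    using zero_le_power2[of "norm a - norm b"] by (simp add: power2_eq_square algebra_simps)
  then have "norm a + norm b \<le> sqrt (2 * (norm (a + b))\<^sup>2)"
    by (rule real_le_rsqrt)
  then show ?thesis
    by (simp add: real_sqrt_mult)
qed

text \<open>The parts of \<open>v\<close> and \<open>h\<close> on the common set \<open>A\<close> are controlled by \<open>\<delta>\<^sub>s\<close>, the two
  cross terms by \<open>\<theta>\<^sub>s\<^sub>,\<^sub>s\<close>; the \<open>\<surd>2\<close> comes from \<open>\<parallel>h\<^sub>S\<parallel> + \<parallel>h\<^sub>A\<parallel> \<le> \<surd>2 \<parallel>h\<parallel>\<close>.\<close>

lemma inner_gram_deviation_le:
  fixes U :: "real^'d^'n"
  assumes T: "card T \<le> s" and S: "card S \<le> s" and A: "card A \<le> s" and TS: "T \<inter> S = {}"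
    and v: "supp_vec v \<subseteq> T" and h: "supp_vec h \<subseteq> S \<union> A"
  shows "\<bar>v \<bullet> h - (U *v v) \<bullet> (U *v h)\<bar>
    \<le> (rip_const U s + sqrt 2 * rop_const U s) * norm v * norm h"
proof -
  define \<delta> \<theta> where "\<delta> = rip_const U s" and "\<theta> = rop_const U s"
  define h\<^sub>S h\<^sub>A where "h\<^sub>S = restrict_vec S h" and "h\<^sub>A = restrict_vec (- S) h"
  define v\<^sub>A v\<^sub>T where "v\<^sub>A = restrict_vec A v" and "v\<^sub>T = restrict_vec (- A) v"
  have supp: "supp_vec h\<^sub>S \<subseteq> S" "supp_vec h\<^sub>A \<subseteq> A - S" "supp_vec v\<^sub>A \<subseteq> A" "supp_vec v\<^sub>T \<subseteq> T - A"
    using h v by (auto simp: h\<^sub>S_def h\<^sub>A_def v\<^sub>A_def v\<^sub>T_def supp_vec_restrict_vec)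
  have "v \<bullet> h\<^sub>S = 0" "v\<^sub>T \<bullet> h\<^sub>A = 0" "h\<^sub>S \<bullet> h\<^sub>A = 0"
    using supp v TS by (auto intro!: inner_eq_0_if_disjoint_supp)
  moreover have "h = h\<^sub>S + h\<^sub>A" "v = v\<^sub>A + v\<^sub>T"
    by (simp_all add: h\<^sub>S_def h\<^sub>A_def v\<^sub>A_def v\<^sub>T_def restrict_vec_add_Compl)
  ultimately have split: "v \<bullet> h - (U *v v) \<bullet> (U *v h)
      = (v\<^sub>A \<bullet> h\<^sub>A - (U *v v\<^sub>A) \<bullet> (U *v h\<^sub>A)) - (U *v v\<^sub>T) \<bullet> (U *v h\<^sub>A) - (U *v v) \<bullet> (U *v h\<^sub>S)"
    by (simp add: inner_add matrix_vector_right_distrib algebra_simps)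
  have "card (T - A) \<le> s"
    using T card_mono[of T "T - A"] by simp
  then have "\<bar>(U *v v\<^sub>T) \<bullet> (U *v h\<^sub>A)\<bar> \<le> \<theta> * norm v\<^sub>T * norm h\<^sub>A"
    unfolding \<theta>_def using supp A by (intro rop_const_le[of "T - A" s A]) auto
  moreover have "\<bar>(U *v v) \<bullet> (U *v h\<^sub>S)\<bar> \<le> \<theta> * norm v * norm h\<^sub>S"
    unfolding \<theta>_def using supp by (intro rop_const_le[OF T S TS v]) auto
  moreover have "\<bar>v\<^sub>A \<bullet> h\<^sub>A - (U *v v\<^sub>A) \<bullet> (U *v h\<^sub>A)\<bar> \<le> \<delta> * norm v\<^sub>A * norm h\<^sub>A"
    unfolding \<delta>_def using supp by (intro rip_inner_deviation_le[OF A]) auto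
  moreover have "\<delta> * norm v\<^sub>A * norm h\<^sub>A \<le> \<delta> * norm v * norm h"
    and "\<theta> * norm v\<^sub>T * norm h\<^sub>A \<le> \<theta> * norm v * norm h\<^sub>A"
    using norm_restrict_vec_le rip_const_nonneg rop_const_nonneg
    by (auto simp: \<delta>_def \<theta>_def v\<^sub>A_def v\<^sub>T_def h\<^sub>A_def intro!: mult_mono mult_right_mono)
  ultimately have "\<bar>v \<bullet> h - (U *v v) \<bullet> (U *v h)\<bar>
      \<le> \<delta> * norm v * norm h + (\<theta> * norm v) * (norm h\<^sub>S + norm h\<^sub>A)"
    unfolding split by (simp add: algebra_simps abs_le_iff)
  also have "\<dots> \<le> \<delta> * norm v * norm h + (\<theta> * norm v) * (sqrt 2 * norm h)"
    using \<open>h = h\<^sub>S + h\<^sub>A\<close> \<open>h\<^sub>S \<bullet> h\<^sub>A = 0\<close>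
    by (intro add_left_mono mult_left_mono)
       (simp_all add: \<theta>_def rop_const_nonneg norm_add_norm_le_sqrt2_norm)
  finally show ?thesis
    by (simp add: \<delta>_def \<theta>_def algebra_simps)
qed

lemma supp_vec_alg_step:
  assumes "lam > 0"
  shows "supp_vec (alg_step U y lam x) = {i. lam < \<bar>(x - transpose U *v (U *v x - y)) $ i\<bar>}"
  using assms by (auto simp: alg_step_def supp_vec_def sgn_if Let_def split: if_splits)

lemma card_mult_sq_less_norm_restrict_vec:
  assumes T: "T \<subseteq> {i. lam < \<bar>w $ i\<bar>}" "T \<noteq> {}" and lam: "lam \<ge> 0"
  shows "real (card T) * lam\<^sup>2 < (norm (restrict_vec T w))\<^sup>2"
proof -
  have "lam\<^sup>2 < (w $ i)\<^sup>2" if "i \<in> T" for i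
    using T that lam power_strict_mono[of lam "\<bar>w $ i\<bar>" 2] by auto
  then have "(\<Sum>i\<in>T. lam\<^sup>2) < (\<Sum>i\<in>T. (w $ i)\<^sup>2)"
    using T by (intro sum_strict_mono) auto
  also have "\<dots> = (\<Sum>i\<in>UNIV. if i \<in> T then (w $ i)\<^sup>2 else 0)"
    by (simp add: sum.If_cases)
  also have "\<dots> = (norm (restrict_vec T w))\<^sup>2"
    unfolding power2_norm_eq_inner inner_vec_def restrict_vec_def
    by (intro sum.cong) (auto simp: power2_eq_square)
  finally show ?thesis
    by simp
qed

lemma card_supp_alg_step_diff_le:
  fixes U :: "real^'d^'n"
  assumes s: "s \<ge> 1" and xs: "card (supp_vec xs) \<le> s"
    and x: "card (supp_vec x - supp_vec xs) \<le> s" and lam: "lam > 0"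
    and lam_ge: "lam \<ge> (rip_const U s + sqrt 2 * rop_const U s) / sqrt (real s) * norm (x - xs)"
  shows "card (supp_vec (alg_step U (U *v xs) lam x) - supp_vec xs) \<le> s"
proof (rule ccontr)
  define c where "c = rip_const U s + sqrt 2 * rop_const U s"
  define h where "h = x - xs"
  define xh where "xh = x - transpose U *v (U *v x - U *v xs)"
  assume "\<not> ?thesis"
  then obtain T where T: "T \<subseteq> supp_vec (alg_step U (U *v xs) lam x) - supp_vec xs" "card T = s"
    using obtain_subset_with_card_n[of s] by (metis nat_le_linear)
  define v where "v = restrict_vec T xh"
  have "T \<noteq> {}"
    using T(2) s by auto
  then have norm_v_gt: "real s * lam\<^sup>2 < (norm v)\<^sup>2"
    unfolding v_def xh_def using T lam supp_vec_alg_step[OF lam, of U "U *v xs" x]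
    by (intro card_mult_sq_less_norm_restrict_vec[where T = T, simplified T(2)]) auto
  have supp_v: "supp_vec v \<subseteq> T"
    by (simp add: v_def supp_vec_restrict_vec)
  have supp_h: "supp_vec h \<subseteq> supp_vec xs \<union> (supp_vec x - supp_vec xs)"
    using supp_vec_diff[of x xs] by (auto simp: h_def)
  have "v \<bullet> xs = 0"
    using supp_v T by (intro inner_eq_0_if_disjoint_supp) auto
  moreover have "v \<bullet> (transpose U *v w) = (U *v v) \<bullet> w" for w
    by (metis dot_lmul_matrix inner_commute transpose_matrix_vector)
  moreover have "xh = xs + h - transpose U *v (U *v h)"
    by (simp add: xh_def h_def matrix_vector_mult_diff_distrib)
  ultimately have "(norm v)\<^sup>2 = v \<bullet> h - (U *v v) \<bullet> (U *v h)"
    unfolding v_def inner_restrict_vec_self[symmetric]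
    by (metis add_0 inner_add_right inner_diff_right)
  also have "\<dots> \<le> c * norm v * norm h"
    unfolding c_def using inner_gram_deviation_le[OF _ xs x _ supp_v supp_h, of U] T
    by (auto simp: abs_le_iff)
  also have "\<dots> \<le> norm v * (sqrt (real s) * lam)"
  proof -
    have "c * norm h \<le> sqrt (real s) * lam"
      using lam_ge s by (simp add: c_def h_def pos_divide_le_eq mult.commute)
    then have "norm v * (c * norm h) \<le> norm v * (sqrt (real s) * lam)"
      by (rule mult_left_mono) simp
    then show ?thesis
      by (simp add: mult_ac)
  qed
  finally have "norm v * norm v \<le> norm v * (sqrt (real s) * lam)"
    by (simp add: power2_eq_square)
  moreover have "norm v > 0"
    using norm_v_gt by (cases "v = 0") (auto simp: mult_less_0_iff)
  ultimately have "norm v \<le> sqrt (real s) * lam"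
    by simp
  then have "(norm v)\<^sup>2 \<le> real s * lam\<^sup>2"
    by (metis norm_ge_zero power_mono power_mult_distrib real_sqrt_pow2 of_nat_0_le_iff)
  then show False
    using norm_v_gt by simp
qed

theorem corollary1:
  fixes U :: "real ^ 'd ^ 'n" and xs :: "real ^ 'd" and y :: "real ^ 'n"
    and s :: nat and x :: "nat \<Rightarrow> real ^ 'd" and lam :: "nat \<Rightarrow> real" and t :: nat
  assumes s_pos: "s \<ge> 1"
    and s_dim: "2 * s \<le> CARD('d)"
    and sparse: "card (supp_vec xs) \<le> s"
    and y_def: "y = U *v xs"
    and lam_pos: "\<forall>k\<ge>1. lam k > 0"
    and x_init: "x 1 = 0"
    and x_iter: "\<forall>k\<ge>1. x (Suc k) = alg_step U y (lam k) (x k)"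
    and t_ge: "t \<ge> 1"
    and hyp1: "card (supp_vec (x t) - supp_vec xs) \<le> s"
    and hyp2: "lam t \<ge> (rip_const U s + sqrt 2 * rop_const U s) / sqrt (real s) * norm (x t - xs)"
  shows "card (supp_vec (x (Suc t)) - supp_vec xs) \<le> s
    \<and> card (supp_vec xs \<union> supp_vec (x t) \<union> supp_vec (x (Suc t))) \<le> 3 * s"
proof
  have "x (Suc t) = alg_step U (U *v xs) (lam t) (x t)"
    using x_iter t_ge y_def by simp
  then show new: "card (supp_vec (x (Suc t)) - supp_vec xs) \<le> s"
    using card_supp_alg_step_diff_le[OF s_pos sparse hyp1 _ hyp2] lam_pos t_ge by simp
  let ?S = "supp_vec xs"
  have "?S \<union> supp_vec (x t) \<union> supp_vec (x (Suc t))
      = ?S \<union> (supp_vec (x t) - ?S) \<union> (supp_vec (x (Suc t)) - ?S)"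
    by blast
  also have "card \<dots> \<le> card ?S + card (supp_vec (x t) - ?S) + card (supp_vec (x (Suc t)) - ?S)"
    by (meson card_Un_le add_le_mono1 order_trans)
  finally show "card (?S \<union> supp_vec (x t) \<union> supp_vec (x (Suc t))) \<le> 3 * s"
    using sparse hyp1 new by linarith
qed

end
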